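(* Assume hypotheses (A1)–(A4) below and fix $\sigma\in(0,\infty]$. Then the functionals $\mathcal E_{\sigma,h}$ (restricted to $\mathcal T_\sigma$) $\Gamma$-converge as $h\to0$ in the strong topology of $\mathcal T_\sigma$ to $\overline{\mathcal E}_\sigma$.
   Context: Let $\{\mathcal T_\sigma\}_{\sigma\in\mathbb R\cup\{\pm\infty\}}$ be reflexive Banach spaces with norms $\|\cdot\|_{\mathcal T_\sigma}$, $\mathcal T_{-\sigma}:=\mathcal T_\sigma^*$, and $\mathcal T_\sigma\subset\mathcal T_0$ for $\sigma\in(0,\infty]$. Limits "as $\sigma\to\infty$" refer to arbitrary sequences $\sigma_n\to\infty$. (A1) (i) There is $M_1>0$ independent of $\sigma$ with $M_1\|u\|_{\mathcal T_0}\le\|u\|_{\mathcal T_\sigma}$ for all $\sigma\in(0,\infty]$, $u\in\mathcal T_\sigma$. (ii) If $v_\sigma\in\mathcal T_\sigma$ with $\|v_\sigma\|_{\mathcal T_\sigma}\le C$ ($C$ independent of $\sigma$), then $\{v_\sigma\}$ is relatively compact in $\mathcal T_0$ as $\sigma\to\infty$ and each limit point lies in $\mathcal T_\infty$. (A2) For each $\sigma\in(0,\infty]$, $\mathcal E_\sigma:\mathcal T_\sigma\to[0,\infty)$ is weakly lower semicontinuous on $\mathcal T_\sigma$, and: (i) there is $\varphi\in C^0([0,\infty)^2)$ with $|\mathcal E_\sigma(u)-\mathcal E_\sigma(v)|\le\varphi(\|u\|_{\mathcal T_\sigma},\|v\|_{\mathcal T_\sigma})\|u-v\|_{\mathcal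 T_\sigma}$ for all $u,v\in\mathcal T_\sigma$; (ii) there exist $p\in(1,\infty)$, $\alpha>0$, $\psi\in C^0([0,\infty))$ with $\psi(t)/t^p\to0$ as $t\to\infty$, independent of $\sigma$, with $\alpha\|u\|^p_{\mathcal T_\sigma}\le\mathcal E_\sigma(u)+\psi(\|u\|_{\mathcal T_\sigma})$. (A3) With $\overline{\mathcal E}_\sigma:\mathcal T_0\to[0,\infty]$ equal to $\mathcal E_\sigma$ on $\mathcal T_\sigma$ and $+\infty$ on $\mathcal T_0\setminus\mathcal T_\sigma$ ($\sigma\in(0,\infty]$), $\overline{\mathcal E}_\sigma$ $\Gamma$-converges to $\overline{\mathcal E}_\infty$ as $\sigma\to\infty$ in the strong topology of $\mathcal T_0$. (A4) For $\sigma\in(0,\infty]$, $h\in(0,h_0]$, $W_{\sigma,h}\subset\mathcal T_\sigma$ are finite-dimensional subspaces such that for each $h$ the span of $\bigcup_{\sigma\in(0,\infty]}W_{\sigma,h}$ is finite-dimensional, and: (i) for every $\sigma\in(0,\infty]$ and $u\in\mathcal T_\sigma$ there exist $h_n\to0$ and $u_n\in W_{\sigma,h_n}$ with $\|u-u_n\|_{\mathcal T_\sigma}\to0$; (ii) for each $h\in(0,h_0]$, $W_{\infty,h}=\mathcal T_\infty\cap\bigcup_{\sigma\in(0,\infty]}W_{\sigma,h}$; (iii) with $W_{\infty,0}:=\mathcal T_\infty$: for every $h\in[0,h_0]$, every $v\in W_{\infty,h}$ and every sequence $(\sigma_n,h_n)$ with $\sigma_n\to\infty$, $h_n\in(0,h_0]$,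 and $h_n=h$ for all $n$ if $h>0$, $h_n\to0$ if $h=0$, there exist $v_{\sigma_n}\in\mathcal T_{\sigma_n}$ with $\|v_{\sigma_n}-v\|_{\mathcal T_0}\to0$ and $\mathcal E_{\sigma_n}(v_{\sigma_n})\to\mathcal E_\infty(v)$, and $v_n\in W_{\sigma_n,h_n}$ with $\|v_n-v_{\sigma_n}\|_{\mathcal T_{\sigma_n}}\to0$. Define $\mathcal E_{\sigma,h}:\mathcal T_0\to[0,\infty]$ by $\mathcal E_{\sigma,h}=\mathcal E_\sigma$ on $W_{\sigma,h}$ and $+\infty$ on $\mathcal T_0\setminus W_{\sigma,h}$. $\Gamma$-convergence of $I_s:X\to\overline{\mathbb R}$ to $I$ (in a topology on $X$) means: (1) $I(v)\le\liminf I_s(v_s)$ whenever $v_s\to v$; (2) for each $v$ there is $v_s\to v$ with $\limsup I_s(v_s)\le I(v)$. *)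

theory Defs
  imports "HOL-Analysis.Analysis"
begin

definition normed_sub :: "'a::real_vector set \<Rightarrow> ('a \<Rightarrow> real) \<Rightarrow> bool" where
  "normed_sub S N \<longleftrightarrow> subspace S \<and>
     (\<forall>x\<in>S. N x \<ge> 0 \<and> (N x = 0 \<longleftrightarrow> x = 0)) \<and>
     (\<forall>c. \<forall>x\<in>S. N (c *\<^sub>R x) = \<bar>c\<bar> * N x) \<and>
     (\<forall>x\<in>S. \<forall>y\<in>S. N (x + y) \<le> N x + N y)"

definition banach_sub :: "'a::real_vector set \<Rightarrow> ('a \<Rightarrow> real) \<Rightarrow> bool" where
  "banach_sub S N \<longleftrightarrow> normed_sub S N \<and>
     (\<forall>u. (\<forall>n. u n \<in> S) \<longrightarrow> (\<forall>e>0. \<exists>M. \<forall>m\<ge>M. \<forall>n\<ge>M. N (u m - u n) < e) \<longrightarrow>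
          (\<exists>v\<in>S. (\<lambda>n. N (u n - v)) \<longlonglongrightarrow> 0))"

definition dual_sp :: "'a::real_vector set \<Rightarrow> ('a \<Rightarrow> real) \<Rightarrow> ('a \<Rightarrow> real) set" where
  "dual_sp S N = {f. (\<forall>x\<in>S. \<forall>y\<in>S. f (x + y) = f x + f y) \<and>
                     (\<forall>c. \<forall>x\<in>S. f (c *\<^sub>R x) = c * f x) \<and>
                     (\<exists>C. \<forall>x\<in>S. \<bar>f x\<bar> \<le> C * N x) \<and>
                     (\<forall>x. x \<notin> S \<longrightarrow> f x = 0)}"

definition dual_norm :: "'a::real_vector set \<Rightarrow> ('a \<Rightarrow> real) \<Rightarrow> ('a \<Rightarrow> real) \<Rightarrow> real" where
  "dual_norm S N f = Sup {\<bar>f x\<bar> | x. x \<in> S \<and> N x \<le> 1}"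

definition bidual_sp :: "'a::real_vector set \<Rightarrow> ('a \<Rightarrow> real) \<Rightarrow> (('a \<Rightarrow> real) \<Rightarrow> real) set" where
  "bidual_sp S N = {\<Phi>. (\<forall>f\<in>dual_sp S N. \<forall>g\<in>dual_sp S N. \<Phi> (\<lambda>x. f x + g x) = \<Phi> f + \<Phi> g) \<and>
                        (\<forall>c. \<forall>f\<in>dual_sp S N. \<Phi> (\<lambda>x. c * f x) = c * \<Phi> f) \<and>
                        (\<exists>C. \<forall>f\<in>dual_sp S N. \<bar>\<Phi> f\<bar> \<le> C * dual_norm S N f)}"

definition reflexive_banach :: "'a::real_vector set \<Rightarrow> ('a \<Rightarrow> real) \<Rightarrow> bool" where
  "reflexive_banach S N \<longleftrightarrow> banach_sub S N \<and>
     (\<forall>\<Phi>\<in>bidual_sp S N. \<exists>x\<in>S. \<forall>f\<in>dual_sp S N. \<Phi> f = f x)"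

text \<open>Lower semicontinuity w.r.t. the weak topology of (S,N): every strict sublevel
  threshold is kept on a basic weak neighbourhood.\<close>
definition weakly_lsc :: "'a::real_vector set \<Rightarrow> ('a \<Rightarrow> real) \<Rightarrow> ('a \<Rightarrow> real) \<Rightarrow> bool" where
  "weakly_lsc S N E \<longleftrightarrow> (\<forall>u\<in>S. \<forall>c. c < E u \<longrightarrow>
     (\<exists>F \<epsilon>. finite F \<and> F \<subseteq> dual_sp S N \<and> \<epsilon> > 0 \<and>
        (\<forall>v\<in>S. (\<forall>f\<in>F. \<bar>f v - f u\<bar> < \<epsilon>) \<longrightarrow> c < E v)))"

text \<open>T :: ereal \<Rightarrow> 'a set gives the spaces \<open>T_\<sigma>\<close> for \<sigma> in [0,\<infinity>] (all inside the
  ambient space), N \<sigma> their norms, E \<sigma> the energies, W \<sigma> h the discrete spaces.\<close>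

definition Ebar :: "(ereal \<Rightarrow> 'a set) \<Rightarrow> (ereal \<Rightarrow> 'a \<Rightarrow> real) \<Rightarrow> ereal \<Rightarrow> 'a \<Rightarrow> ereal" where
  "Ebar T E \<sigma> u = (if u \<in> T \<sigma> then ereal (E \<sigma> u) else \<infinity>)"

definition Esh :: "(ereal \<Rightarrow> real \<Rightarrow> 'a set) \<Rightarrow> (ereal \<Rightarrow> 'a \<Rightarrow> real) \<Rightarrow> ereal \<Rightarrow> real \<Rightarrow> 'a \<Rightarrow> ereal" where
  "Esh W E \<sigma> h u = (if u \<in> W \<sigma> h then ereal (E \<sigma> u) else \<infinity>)"

definition spaces_ok :: "(ereal \<Rightarrow> 'a::real_vector set) \<Rightarrow> (ereal \<Rightarrow> 'a \<Rightarrow> real) \<Rightarrow> bool" where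
  "spaces_ok T N \<longleftrightarrow> (\<forall>\<sigma>\<ge>0. reflexive_banach (T \<sigma>) (N \<sigma>)) \<and> (\<forall>\<sigma>>0. T \<sigma> \<subseteq> T 0)"

definition A1 :: "(ereal \<Rightarrow> 'a::real_vector set) \<Rightarrow> (ereal \<Rightarrow> 'a \<Rightarrow> real) \<Rightarrow> bool" where
  "A1 T N \<longleftrightarrow>
    (\<exists>M1>0. \<forall>\<sigma>>0. \<forall>u\<in>T \<sigma>. M1 * N 0 u \<le> N \<sigma> u) \<and>
    (\<forall>(s::nat \<Rightarrow> real) v C. (\<forall>n. s n > 0) \<longrightarrow> filterlim s at_top sequentially \<longrightarrow>
        (\<forall>n. v n \<in> T (ereal (s n)) \<and> N (ereal (s n)) (v n) \<le> C) \<longrightarrow>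
        (\<exists>r w. strict_mono r \<and> w \<in> T 0 \<and> (\<lambda>n. N 0 (v (r n) - w)) \<longlonglongrightarrow> 0) \<and>
        (\<forall>r w. strict_mono r \<longrightarrow> w \<in> T 0 \<longrightarrow> (\<lambda>n. N 0 (v (r n) - w)) \<longlonglongrightarrow> 0 \<longrightarrow> w \<in> T \<infinity>))"

definition A2 :: "(ereal \<Rightarrow> 'a::real_vector set) \<Rightarrow> (ereal \<Rightarrow> 'a \<Rightarrow> real) \<Rightarrow> (ereal \<Rightarrow> 'a \<Rightarrow> real) \<Rightarrow> bool" where
  "A2 T N E \<longleftrightarrow>
    (\<forall>\<sigma>>0. (\<forall>u\<in>T \<sigma>. E \<sigma> u \<ge> 0) \<and> weakly_lsc (T \<sigma>) (N \<sigma>) (E \<sigma>) \<and>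
       (\<exists>\<phi>::real \<Rightarrow> real \<Rightarrow> real. continuous_on {(a, b). a \<ge> 0 \<and> b \<ge> 0} (case_prod \<phi>) \<and>
          (\<forall>u\<in>T \<sigma>. \<forall>v\<in>T \<sigma>. \<bar>E \<sigma> u - E \<sigma> v\<bar> \<le> \<phi> (N \<sigma> u) (N \<sigma> v) * N \<sigma> (u - v)))) \<and>
    (\<exists>p \<alpha> (\<psi>::real \<Rightarrow> real). 1 < p \<and> \<alpha> > 0 \<and> continuous_on {0..} \<psi> \<and>
       ((\<lambda>t. \<psi> t / t powr p) \<longlongrightarrow> 0) at_top \<and>
       (\<forall>\<sigma>>0. \<forall>u\<in>T \<sigma>. \<alpha> * N \<sigma> u powr p \<le> E \<sigma> u + \<psi> (N \<sigma> u)))"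

definition A3 :: "(ereal \<Rightarrow> 'a::real_vector set) \<Rightarrow> (ereal \<Rightarrow> 'a \<Rightarrow> real) \<Rightarrow> (ereal \<Rightarrow> 'a \<Rightarrow> real) \<Rightarrow> bool" where
  "A3 T N E \<longleftrightarrow>
    (\<forall>s::nat \<Rightarrow> real. (\<forall>n. s n > 0) \<longrightarrow> filterlim s at_top sequentially \<longrightarrow>
       (\<forall>v w. (\<forall>n. v n \<in> T 0) \<longrightarrow> w \<in> T 0 \<longrightarrow> (\<lambda>n. N 0 (v n - w)) \<longlonglongrightarrow> 0 \<longrightarrow>
            Ebar T E \<infinity> w \<le> liminf (\<lambda>n. Ebar T E (ereal (s n)) (v n))) \<and>
       (\<forall>w\<in>T 0. \<exists>v. (\<forall>n. v n \<in> T 0) \<and> (\<lambda>n. N 0 (v n - w)) \<longlonglongrightarrow> 0 \<and>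
            limsup (\<lambda>n. Ebar T E (ereal (s n)) (v n)) \<le> Ebar T E \<infinity> w))"

definition A4 :: "(ereal \<Rightarrow> 'a::real_vector set) \<Rightarrow> (ereal \<Rightarrow> 'a \<Rightarrow> real) \<Rightarrow> (ereal \<Rightarrow> 'a \<Rightarrow> real)
                   \<Rightarrow> (ereal \<Rightarrow> real \<Rightarrow> 'a set) \<Rightarrow> real \<Rightarrow> bool" where
  "A4 T N E W h0 \<longleftrightarrow> h0 > 0 \<and>
    (\<forall>\<sigma>>0. \<forall>h\<in>{0<..h0}. subspace (W \<sigma> h) \<and> W \<sigma> h \<subseteq> T \<sigma> \<and> (\<exists>B. finite B \<and> W \<sigma> h = span B)) \<and>
    (\<forall>h\<in>{0<..h0}. \<exists>B. finite B \<and> (\<Union>\<sigma>\<in>{0<..}. W \<sigma> h) \<subseteq> span B) \<and>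
    (\<forall>\<sigma>>0. \<forall>u\<in>T \<sigma>. \<exists>hs us. (\<forall>n. hs n \<in> {0<..h0} \<and> us n \<in> W \<sigma> (hs n)) \<and> hs \<longlonglongrightarrow> 0 \<and>
        (\<lambda>n. N \<sigma> (u - us n)) \<longlonglongrightarrow> 0) \<and>
    (\<forall>h\<in>{0<..h0}. W \<infinity> h = T \<infinity> \<inter> (\<Union>\<sigma>\<in>{0<..}. W \<sigma> h)) \<and>
    (\<forall>h\<in>{0..h0}. \<forall>v\<in>(if h = 0 then T \<infinity> else W \<infinity> h).
       \<forall>(s::nat \<Rightarrow> real) hs. (\<forall>n. s n > 0) \<longrightarrow> filterlim s at_top sequentially \<longrightarrow>
         (\<forall>n. hs n \<in> {0<..h0}) \<longrightarrow> (h > 0 \<longrightarrow> (\<forall>n. hs n = h)) \<longrightarrow> (h = 0 \<longrightarrow> hs \<longlonglongrightarrow> 0) \<longrightarrow>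
         (\<exists>vs vn. (\<forall>n. vs n \<in> T (ereal (s n))) \<and> (\<lambda>n. N 0 (vs n - v)) \<longlonglongrightarrow> 0 \<and>
                  (\<lambda>n. E (ereal (s n)) (vs n)) \<longlonglongrightarrow> E \<infinity> v \<and>
                  (\<forall>n. vn n \<in> W (ereal (s n)) (hs n)) \<and>
                  (\<lambda>n. N (ereal (s n)) (vn n - vs n)) \<longlonglongrightarrow> 0))"

end

theory Submission
  imports Defs
begin

text \<open>Hypothesis (A2) makes \<open>E \<sigma>\<close> locally Lipschitz, hence continuous in the strong
  topology of \<open>T \<sigma>\<close>. The liminf inequality then follows from \<open>Esh \<ge> E\<close>, and the
  density of the discrete spaces, (A4)(i), provides recovery sequences on which \<open>Esh\<close> and
  \<open>E\<close> agree. For fixed \<open>\<sigma>\<close> neither the compactness (A1) nor the limit \<open>\<sigma> \<rightarrow> \<infinity>\<close> (A3) plays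
  a role.\<close>

lemma normed_sub_norm_minus_commute:
  assumes "normed_sub S N" and "a \<in> S" and "b \<in> S"
  shows "N (a - b) = N (b - a)"
proof -
  have "a - b \<in> S"
    using assms by (simp add: normed_sub_def subspace_diff)
  then have "N ((-1) *\<^sub>R (a - b)) = N (a - b)"
    using assms(1) unfolding normed_sub_def by (metis abs_minus_cancel abs_one mult_1)
  then show ?thesis by simp
qed

lemma normed_sub_norm_diff_ge:
  assumes ns: "normed_sub S N" and a: "a \<in> S" and b: "b \<in> S"
  shows "\<bar>N a - N b\<bar> \<le> N (a - b)"
proof -
  have "a - b \<in> S" "b - a \<in> S"
    using ns a b by (auto simp: normed_sub_def subspace_diff)
  moreover have "\<forall>x\<in>S. \<forall>y\<in>S. N (x + y) \<le> N x + N y"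
    using ns by (simp add: normed_sub_def)
  ultimately have "N a \<le> N (a - b) + N b" "N b \<le> N (b - a) + N a"
    using a b by (metis diff_add_cancel)+
  then show ?thesis
    using normed_sub_norm_minus_commute[OF ns a b] by linarith
qed

lemma normed_sub_tendsto_norm:
  assumes ns: "normed_sub S N" and xs: "\<forall>n. xs n \<in> S" and x: "x \<in> S"
    and conv: "(\<lambda>n. N (xs n - x)) \<longlonglongrightarrow> 0"
  shows "(\<lambda>n. N (xs n)) \<longlonglongrightarrow> N x"
proof -
  have "(\<lambda>n. N (xs n) - N x) \<longlonglongrightarrow> 0"
    by (rule Lim_null_comparison[OF _ conv])
      (use normed_sub_norm_diff_ge[OF ns] xs x in auto)
  then show ?thesis by (rule LIM_zero_cancel)
qed

lemma locally_lipschitz_tendsto: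
  assumes ns: "normed_sub S N"
    and \<phi>_cont: "continuous_on {(a, b). a \<ge> 0 \<and> b \<ge> 0} (case_prod \<phi>)"
    and lip: "\<forall>u\<in>S. \<forall>v\<in>S. \<bar>E u - E v\<bar> \<le> \<phi> (N u) (N v) * N (u - v)"
    and xs: "\<forall>n. xs n \<in> S" and x: "x \<in> S"
    and conv: "(\<lambda>n. N (xs n - x)) \<longlonglongrightarrow> 0"
  shows "(\<lambda>n. E (xs n)) \<longlonglongrightarrow> E x"
proof -
  have nonneg: "\<forall>y\<in>S. N y \<ge> 0"
    using ns by (simp add: normed_sub_def)
  have "((\<lambda>n. (N (xs n), N x)) \<longlongrightarrow> (N x, N x)) sequentially"
    using normed_sub_tendsto_norm[OF ns xs x conv] by (intro tendsto_Pair) auto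
  then have "((\<lambda>n. case_prod \<phi> (N (xs n), N x)) \<longlongrightarrow> case_prod \<phi> (N x, N x)) sequentially"
    by (rule continuous_on_tendsto_compose[OF \<phi>_cont]) (use nonneg xs x in auto)
  then have "(\<lambda>n. \<phi> (N (xs n)) (N x)) \<longlonglongrightarrow> \<phi> (N x) (N x)"
    by simp
  then have "(\<lambda>n. \<phi> (N (xs n)) (N x) * N (xs n - x)) \<longlonglongrightarrow> \<phi> (N x) (N x) * 0"
    using conv by (rule tendsto_mult)
  then have bound_to_0: "(\<lambda>n. \<phi> (N (xs n)) (N x) * N (xs n - x)) \<longlonglongrightarrow> 0"
    by simp
  have "\<forall>n. norm (E (xs n) - E x) \<le> \<phi> (N (xs n)) (N x) * N (xs n - x)"
    using lip xs x by simp
  then have "(\<lambda>n. E (xs n) - E x) \<longlonglongrightarrow> 0"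
    by (rule Lim_null_comparison[OF always_eventually bound_to_0])
  then show ?thesis by (rule LIM_zero_cancel)
qed

lemma Esh_ge: "ereal (E \<sigma> u) \<le> Esh W E \<sigma> h u"
  by (simp add: Esh_def)

lemma Esh_eq: "u \<in> W \<sigma> h \<Longrightarrow> Esh W E \<sigma> h u = ereal (E \<sigma> u)"
  by (simp add: Esh_def)

lemma Ebar_eq: "u \<in> T \<sigma> \<Longrightarrow> Ebar T E \<sigma> u = ereal (E \<sigma> u)"
  by (simp add: Ebar_def)

lemma A2_locally_lipschitz:
  assumes "A2 T N E" and "\<sigma> > 0"
  obtains \<phi> where "continuous_on {(a, b). a \<ge> 0 \<and> b \<ge> 0} (case_prod \<phi>)"
    and "\<forall>u\<in>T \<sigma>. \<forall>v\<in>T \<sigma>. \<bar>E \<sigma> u - E \<sigma> v\<bar> \<le> \<phi> (N \<sigma> u) (N \<sigma> v) * N \<sigma> (u - v)"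
  using assms(1)[unfolded A2_def, THEN conjunct1, rule_format, OF assms(2)] that by blast

lemma A4_discrete_subset:
  assumes "A4 T N E W h0" and "\<sigma> > 0" and "h \<in> {0<..h0}"
  shows "W \<sigma> h \<subseteq> T \<sigma>"
  using assms(1)[unfolded A4_def, THEN conjunct2, THEN conjunct1, rule_format, OF assms(2,3)]
  by blast

lemma A4_density:
  assumes "A4 T N E W h0" and "\<sigma> > 0" and "u \<in> T \<sigma>"
  obtains hs us where "\<forall>n. hs n \<in> {0<..h0} \<and> us n \<in> W \<sigma> (hs n)" and "hs \<longlonglongrightarrow> 0"
    and "(\<lambda>n. N \<sigma> (u - us n)) \<longlonglongrightarrow> 0"
  using assms(1)[unfolded A4_def, THEN conjunct2, THEN conjunct2, THEN conjunct2, THEN conjunct1,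
      rule_format, OF assms(2,3)] that
  by blast

lemma spaces_ok_normed_sub: "spaces_ok T N \<Longrightarrow> \<sigma> \<ge> 0 \<Longrightarrow> normed_sub (T \<sigma>) (N \<sigma>)"
  by (simp add: spaces_ok_def reflexive_banach_def banach_sub_def)

lemma A2_tendsto_energy:
  assumes "spaces_ok T N" and "A2 T N E" and "\<sigma> > 0"
    and "\<forall>n. us n \<in> T \<sigma>" and "u \<in> T \<sigma>" and "(\<lambda>n. N \<sigma> (us n - u)) \<longlonglongrightarrow> 0"
  shows "((\<lambda>n. ereal (E \<sigma> (us n))) \<longlongrightarrow> ereal (E \<sigma> u)) sequentially"
proof -
  obtain \<phi> where "continuous_on {(a, b). a \<ge> 0 \<and> b \<ge> 0} (case_prod \<phi>)"
    and "\<forall>u\<in>T \<sigma>. \<forall>v\<in>T \<sigma>. \<bar>E \<sigma> u - E \<sigma> v\<bar> \<le> \<phi> (N \<sigma> u) (N \<sigma> v) * N \<sigma> (u - v)"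
    using A2_locally_lipschitz[OF assms(2,3)] .
  then show ?thesis
    using locally_lipschitz_tendsto[OF spaces_ok_normed_sub[OF assms(1)] _ _ assms(4-6)] assms(3)
    by (intro tendsto_ereal) simp
qed

lemma Esh_liminf_inequality:
  assumes "spaces_ok T N" and "A2 T N E" and "\<sigma> > 0"
    and "\<forall>n. us n \<in> T \<sigma>" and "u \<in> T \<sigma>" and "(\<lambda>n. N \<sigma> (us n - u)) \<longlonglongrightarrow> 0"
  shows "Ebar T E \<sigma> u \<le> liminf (\<lambda>n. Esh W E \<sigma> (hs n) (us n))"
proof -
  have "Ebar T E \<sigma> u = liminf (\<lambda>n. ereal (E \<sigma> (us n)))"
    using lim_imp_Liminf[OF trivial_limit_sequentially A2_tendsto_energy[OF assms]] assms(5)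
    by (simp add: Ebar_eq)
  also have "\<dots> \<le> liminf (\<lambda>n. Esh W E \<sigma> (hs n) (us n))"
    by (intro Liminf_mono) (simp add: Esh_ge)
  finally show ?thesis .
qed

lemma Esh_recovery_sequence:
  assumes "spaces_ok T N" and "A2 T N E" and "A4 T N E W h0" and "\<sigma> > 0" and u: "u \<in> T \<sigma>"
  obtains hs us where "\<forall>n. hs n \<in> {0<..h0}" and "hs \<longlonglongrightarrow> 0" and "\<forall>n. us n \<in> T \<sigma>"
    and "(\<lambda>n. N \<sigma> (us n - u)) \<longlonglongrightarrow> 0"
    and "limsup (\<lambda>n. Esh W E \<sigma> (hs n) (us n)) = Ebar T E \<sigma> u"
proof -
  obtain hs us where hs_us: "\<forall>n. hs n \<in> {0<..h0} \<and> us n \<in> W \<sigma> (hs n)" and "hs \<longlonglongrightarrow> 0"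
    and conv: "(\<lambda>n. N \<sigma> (u - us n)) \<longlonglongrightarrow> 0"
    using A4_density[OF assms(3,4) u] .
  have us: "\<forall>n. us n \<in> T \<sigma>"
    using hs_us A4_discrete_subset[OF assms(3,4)] by blast
  have conv': "(\<lambda>n. N \<sigma> (us n - u)) \<longlonglongrightarrow> 0"
    using conv normed_sub_norm_minus_commute[OF spaces_ok_normed_sub[OF assms(1)]] assms(4) us u
    by simp
  have "limsup (\<lambda>n. Esh W E \<sigma> (hs n) (us n)) = limsup (\<lambda>n. ereal (E \<sigma> (us n)))"
    using hs_us by (simp add: Esh_eq)
  also have "\<dots> = Ebar T E \<sigma> u"
    using A2_tendsto_energy[OF assms(1,2,4) us u conv'] u by (simp add: Ebar_eq lim_imp_Limsup)
  finally show ?thesis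
    using hs_us by (intro that[OF _ \<open>hs \<longlonglongrightarrow> 0\<close> us conv']) simp_all
qed

theorem theorem2p10:
  fixes T :: "ereal \<Rightarrow> 'a::real_vector set"
    and N :: "ereal \<Rightarrow> 'a \<Rightarrow> real"
    and E :: "ereal \<Rightarrow> 'a \<Rightarrow> real"
    and W :: "ereal \<Rightarrow> real \<Rightarrow> 'a set"
    and h0 :: real
    and \<sigma> :: ereal
  assumes "spaces_ok T N"
    and "A1 T N" and "A2 T N E" and "A3 T N E" and "A4 T N E W h0"
    and "\<sigma> > 0"
  shows "(\<forall>hs us u. (\<forall>n. hs n \<in> {0<..h0}) \<longrightarrow> hs \<longlonglongrightarrow> 0 \<longrightarrow>
             (\<forall>n. us n \<in> T \<sigma>) \<longrightarrow> u \<in> T \<sigma> \<longrightarrow> (\<lambda>n. N \<sigma> (us n - u)) \<longlonglongrightarrow> 0 \<longrightarrow>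
             Ebar T E \<sigma> u \<le> liminf (\<lambda>n. Esh W E \<sigma> (hs n) (us n)))
       \<and> (\<forall>u\<in>T \<sigma>. \<exists>hs us. (\<forall>n. hs n \<in> {0<..h0}) \<and> hs \<longlonglongrightarrow> 0 \<and>
             (\<forall>n. us n \<in> T \<sigma>) \<and> (\<lambda>n. N \<sigma> (us n - u)) \<longlonglongrightarrow> 0 \<and>
             limsup (\<lambda>n. Esh W E \<sigma> (hs n) (us n)) \<le> Ebar T E \<sigma> u)"
proof (intro conjI allI impI ballI)
  fix hs us u
  assume "\<forall>n. us n \<in> T \<sigma>" and "u \<in> T \<sigma>" and "(\<lambda>n. N \<sigma> (us n - u)) \<longlonglongrightarrow> 0"
  with assms(1,3,6) show "Ebar T E \<sigma> u \<le> liminf (\<lambda>n. Esh W E \<sigma> (hs n) (us n))"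
    by (rule Esh_liminf_inequality)
next
  fix u assume "u \<in> T \<sigma>"
  then obtain hs us where "\<forall>n. hs n \<in> {0<..h0}" and "hs \<longlonglongrightarrow> 0" and "\<forall>n. us n \<in> T \<sigma>"
    and "(\<lambda>n. N \<sigma> (us n - u)) \<longlonglongrightarrow> 0"
    and "limsup (\<lambda>n. Esh W E \<sigma> (hs n) (us n)) = Ebar T E \<sigma> u"
    using Esh_recovery_sequence[OF assms(1,3,5,6)] by blast
  then show "\<exists>hs us. (\<forall>n. hs n \<in> {0<..h0}) \<and> hs \<longlonglongrightarrow> 0 \<and>
             (\<forall>n. us n \<in> T \<sigma>) \<and> (\<lambda>n. N \<sigma> (us n - u)) \<longlonglongrightarrow> 0 \<and>
             limsup (\<lambda>n. Esh W E \<sigma> (hs n) (us n)) \<le> Ebar T E \<sigma> u"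
    by (intro exI[of _ hs] exI[of _ us]) auto
qed

end
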